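(* (Hyperdense coding and superadditivity in hypersphere theories.) Let $N\ge1$, $n=2^N-1$, and consider the bipartite hypersphere theory with joint state space $\Omega_{AB}$, effects $\mathcal E_{AB}$ and allowed local transformations the convex hull of $\{T_\mu\}$, as defined in the context. In the dense coding protocol where Alice and Bob share $\phi_{\mathbf 0}$, Alice encodes $x\in\{0,1\}^N$ by applying $T_x$ and Bob measures $\{E_y\}_{y\in\{0,1\}^N}$, one has $p(y|x)=\delta_{y,x}$. Consequently $$\chi_C(\Omega_{AB})\ge\chi_{DC}(\Omega_{AB})\ge N,$$ whereas $\chi_C(\Omega_A)=\chi_C(\Omega_B)=1$. In particular for $N\ge3$ the protocol is hyperdense ($\chi_{DC}>2\chi_C(\Omega_A)$) and the classical capacity is superadditive: $\chi_C(\Omega_{AB})>\chi_C(\Omega_A)+\chi_C(\Omega_B)$.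
   Context: The $n$-dimensional hypersphere theory has state space $\Omega_n=\{(1,r)^{\mathrm t}: r\in\mathbb R^n,\ \lVert r\rVert\le1\}$, unit effect $u=(1,\mathbf 0)^{\mathrm t}$, effects $\mathcal E=\{e:0\le e\cdot\omega\le1\ \forall\omega\in\Omega_n\}$; here $\Omega_A=\Omega_B=\Omega_n$. Bipartite states are real $2^N\times2^N$ matrices, identified with $\mathbb R^{2^N}\otimes\mathbb R^{2^N}$ via $v\otimes w=vw^{\mathrm t}$, inner product $X\cdot Y=\mathrm{Tr}(X^{\mathrm t}Y)$; $\Omega_A\otimes_{\min}\Omega_B$ is the convex hull of product states. Coordinates of $\mathbb R^{2^N}$ are indexed by $\nu\in\{0,1\}^N$, with $\nu=\mathbf 0$ the first coordinate. For $\mu\in\{0,1\}^N$, $(d_\mu)_\nu=(-1)^{\mu\cdot\nu}$ ($\mu\cdot\nu$ = inner product mod 2); $\phi_\mu=\mathrm{diag}(d_\mu)$; $\Omega_{AB}=$ convex hull of $\Omega_A\otimes_{\min}\Omega_B\cup\{\phi_\mu\}$; $\mathcal E_{AB}=\{E:0\le E\cdot\phi\le1\ \forall\phi\in\Omega_{AB}\}$; $E_\mu=2^{-N}\phi_\mu$; $T_\mu=\phi_\mu$ acting on $A$ by $\phi\mapsto T_\mu\phi$. Classical capacity $\chi_C(\Omega)$ of a state space with effect set: supremum of $I(X:Y)$ over finite message distributions $p_x$, states $\omega_x\in\Omega$ and measurements (finite families of effects summing to the unit) with $p(y|x)=e_y\cdot\omega_x$. Dense coding protocol with initial state $\phi$: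 message distribution $p_x$, allowed local transformations $T_x$ on $A$, measurement $\{E_y\}\subset\mathcal E_{AB}$, $p(y|x)=E_y\cdot(T_x\phi)$; $\chi_{DC}(\Omega_{AB})$ is the supremum of $I(X:Y)$ over all such protocols and initial states. *)

theory Defs
  imports Complex_Main "HOL-Library.Extended_Real" "HOL-Library.Function_Algebras"
begin

(* Vectors of R^D are represented as functions nat => real vanishing outside {..<D};
   D x D real matrices as functions nat => nat => real vanishing outside {..<D} x {..<D}.
   Coordinate 0 is the first coordinate (nu = 0). An index nu < 2^N is identified with
   the bit string in {0,1}^N given by its binary digits. *)

definition vsp :: "nat \<Rightarrow> (nat \<Rightarrow> real) set" where
  "vsp D = {v. \<forall>i. D \<le> i \<longrightarrow> v i = 0}"

definition msp :: "nat \<Rightarrow> (nat \<Rightarrow> nat \<Rightarrow> real) set" where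
  "msp D = {X. \<forall>i j. (D \<le> i \<or> D \<le> j) \<longrightarrow> X i j = 0}"

definition vinner :: "nat \<Rightarrow> (nat \<Rightarrow> real) \<Rightarrow> (nat \<Rightarrow> real) \<Rightarrow> real" where
  "vinner D v w = (\<Sum>i<D. v i * w i)"

definition minner :: "nat \<Rightarrow> (nat \<Rightarrow> nat \<Rightarrow> real) \<Rightarrow> (nat \<Rightarrow> nat \<Rightarrow> real) \<Rightarrow> real" where
  "minner D X Y = (\<Sum>i<D. \<Sum>j<D. X i j * Y i j)"

definition mhull :: "(nat \<Rightarrow> nat \<Rightarrow> real) set \<Rightarrow> (nat \<Rightarrow> nat \<Rightarrow> real) set" where
  "mhull S = {X. \<exists>(m::nat) (c::nat \<Rightarrow> real) Y. (\<forall>i<m. 0 \<le> c i \<and> Y i \<in> S) \<and>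
                 (\<Sum>i<m. c i) = 1 \<and> X = (\<lambda>a b. \<Sum>i<m. c i * Y i a b)}"

(* hypersphere state space Omega_n in R^D, n = D - 1: states (1, r) with ||r|| <= 1 *)
definition hyp_states :: "nat \<Rightarrow> (nat \<Rightarrow> real) set" where
  "hyp_states D = {v \<in> vsp D. v 0 = 1 \<and> (\<Sum>i\<in>{1..<D}. (v i)\<^sup>2) \<le> 1}"

definition hyp_effects :: "nat \<Rightarrow> (nat \<Rightarrow> real) set" where
  "hyp_effects D = {e \<in> vsp D. \<forall>\<omega>\<in>hyp_states D. 0 \<le> vinner D e \<omega> \<and> vinner D e \<omega> \<le> 1}"

definition unitv :: "nat \<Rightarrow> real" where
  "unitv = (\<lambda>i. if i = 0 then 1 else 0)"

definition tens :: "(nat \<Rightarrow> real) \<Rightarrow> (nat \<Rightarrow> real) \<Rightarrow> (nat \<Rightarrow> nat \<Rightarrow> real)" where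
  "tens v w = (\<lambda>i j. v i * w j)"

definition min_tensor :: "nat \<Rightarrow> (nat \<Rightarrow> nat \<Rightarrow> real) set" where
  "min_tensor D = mhull {tens v w | v w. v \<in> hyp_states D \<and> w \<in> hyp_states D}"

definition bitdot :: "nat \<Rightarrow> nat \<Rightarrow> nat \<Rightarrow> nat" where
  "bitdot N \<mu> \<nu> = (\<Sum>k<N. (\<mu> div 2^k mod 2) * (\<nu> div 2^k mod 2)) mod 2"

definition dvec :: "nat \<Rightarrow> nat \<Rightarrow> nat \<Rightarrow> real" where
  "dvec N \<mu> = (\<lambda>\<nu>. if \<nu> < 2^N then (-1) ^ bitdot N \<mu> \<nu> else 0)"

definition phi :: "nat \<Rightarrow> nat \<Rightarrow> (nat \<Rightarrow> nat \<Rightarrow> real)" where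
  "phi N \<mu> = (\<lambda>i j. if i = j then dvec N \<mu> i else 0)"

definition OmegaAB :: "nat \<Rightarrow> (nat \<Rightarrow> nat \<Rightarrow> real) set" where
  "OmegaAB N = mhull (min_tensor (2^N) \<union> {phi N \<mu> | \<mu>. \<mu> < 2^N})"

definition EffAB :: "nat \<Rightarrow> (nat \<Rightarrow> nat \<Rightarrow> real) set" where
  "EffAB N = {E \<in> msp (2^N). \<forall>\<phi>\<in>OmegaAB N. 0 \<le> minner (2^N) E \<phi> \<and> minner (2^N) E \<phi> \<le> 1}"

definition unitAB :: "nat \<Rightarrow> nat \<Rightarrow> real" where
  "unitAB = tens unitv unitv"

definition Emeas :: "nat \<Rightarrow> nat \<Rightarrow> (nat \<Rightarrow> nat \<Rightarrow> real)" where
  "Emeas N \<mu> = (\<lambda>i j. phi N \<mu> i j / 2^N)"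

(* allowed local transformations: convex hull of T_mu = phi_mu *)
definition allowedT :: "nat \<Rightarrow> (nat \<Rightarrow> nat \<Rightarrow> real) set" where
  "allowedT N = mhull {phi N \<mu> | \<mu>. \<mu> < 2^N}"

definition actA :: "nat \<Rightarrow> (nat \<Rightarrow> nat \<Rightarrow> real) \<Rightarrow> (nat \<Rightarrow> nat \<Rightarrow> real) \<Rightarrow> (nat \<Rightarrow> nat \<Rightarrow> real)" where
  "actA D T \<phi> = (\<lambda>i j. \<Sum>k<D. T i k * \<phi> k j)"

definition is_distr :: "nat \<Rightarrow> (nat \<Rightarrow> real) \<Rightarrow> bool" where
  "is_distr m p \<longleftrightarrow> (\<forall>x<m. 0 \<le> p x) \<and> (\<Sum>x<m. p x) = 1"

definition mutual_info :: "nat \<Rightarrow> nat \<Rightarrow> (nat \<Rightarrow> real) \<Rightarrow> (nat \<Rightarrow> nat \<Rightarrow> real) \<Rightarrow> real" where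
  "mutual_info m k p W =
     (\<Sum>x<m. \<Sum>y<k. if p x * W x y = 0 then 0
        else p x * W x y * log 2 (W x y / (\<Sum>x'<m. p x' * W x' y)))"

definition classical_capacity ::
  "('v \<Rightarrow> 'v \<Rightarrow> real) \<Rightarrow> 'v set \<Rightarrow> 'v set \<Rightarrow> 'v::comm_monoid_add \<Rightarrow> ereal" where
  "classical_capacity ip \<Omega> \<E> u =
     Sup {ereal (mutual_info m k p (\<lambda>x y. ip (e y) (\<omega> x))) | m k p \<omega> e.
            is_distr m p \<and> (\<forall>x<m. \<omega> x \<in> \<Omega>) \<and> (\<forall>y<k. e y \<in> \<E>) \<and> (\<Sum>y<k. e y) = u}"

definition dense_coding_capacity ::
  "('v \<Rightarrow> 'v \<Rightarrow> real) \<Rightarrow> 'v set \<Rightarrow> 'v set \<Rightarrow> 'v::comm_monoid_add \<Rightarrow> 't set \<Rightarrow> ('t \<Rightarrow> 'v \<Rightarrow> 'v) \<Rightarrow> ereal" where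
  "dense_coding_capacity ip \<Omega> \<E> u Ts act =
     Sup {ereal (mutual_info m k p (\<lambda>x y. ip (E y) (act (T x) \<phi>))) | m k p \<phi> T E.
            \<phi> \<in> \<Omega> \<and> is_distr m p \<and> (\<forall>x<m. T x \<in> Ts) \<and> (\<forall>y<k. E y \<in> \<E>) \<and> (\<Sum>y<k. E y) = u}"

definition chiC_local :: "nat \<Rightarrow> ereal" where
  "chiC_local N = classical_capacity (vinner (2^N)) (hyp_states (2^N)) (hyp_effects (2^N)) unitv"

definition chiC_AB :: "nat \<Rightarrow> ereal" where
  "chiC_AB N = classical_capacity (minner (2^N)) (OmegaAB N) (EffAB N) unitAB"

definition chiDC_AB :: "nat \<Rightarrow> ereal" where
  "chiDC_AB N = dense_coding_capacity (minner (2^N)) (OmegaAB N) (EffAB N) unitAB (allowedT N) (actA (2^N))"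

end

theory Submission
  imports Defs
begin

text \<open>The states \<open>\<phi>\<^sub>\<mu>\<close> are the diagonal sign patterns of the Walsh characters \<open>d\<^sub>\<mu>\<close>
of the group \<open>({0,1}\<^sup>N, \<oplus>)\<close>. Since \<open>d\<^sub>\<mu> d\<^sub>\<nu> = d\<^sub>\<mu>\<^sub>\<oplus>\<^sub>\<nu>\<close>, Alice's \<open>T\<^sub>x\<close> turns \<open>\<phi>\<^sub>0\<close>
into \<open>\<phi>\<^sub>x\<close>, and orthogonality of characters gives \<open>E\<^sub>y \<cdot> \<phi>\<^sub>x = \<delta>\<^sub>x\<^sub>y\<close>: all \<open>2\<^sup>N\<close> messages
arrive intact, i.e. \<open>N\<close> bits. \<open>E\<^sub>y\<close> is a valid effect because on a product state
\<open>E\<^sub>y \<cdot> (v \<otimes> w) = (1 + \<Sum>\<^sub>i\<^sub>\<ge>\<^sub>1 \<plusminus>v\<^sub>i w\<^sub>i) / 2\<^sup>N\<close>, and the sum lies in \<open>[-1, 1]\<close>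
because both Bloch vectors have norm at most one. The local capacity is one bit: averaging
a state with its antipode gives the unit, so \<open>e \<cdot> \<omega> \<le> 2 e\<^sub>0\<close> for every effect \<open>e\<close>, which
bounds the mutual information by \<open>log 2 2\<close>; two antipodal states attain it.\<close>

lemma sum_lessThan_add: "(\<Sum>i<a + b. f i) = (\<Sum>i<a. f i) + (\<Sum>i<b. f (i + a :: nat))"
  by (induction b) (simp_all add: algebra_simps)

lemma sum_fun_apply: "(\<Sum>i\<in>A. f i) x = (\<Sum>i\<in>A. f i x)"
  by (induction A rule: infinite_finite_induct) auto

lemma sum_lessThan_delta:
  "(\<Sum>k<(D::nat). (if i = k then a else 0) * f k) = (if i < D then a * f i else (0::real))"
proof -
  have "(\<Sum>k<D. (if i = k then a else 0) * f k) = (\<Sum>k<D. if i = k then a * f i else 0)"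
    by (intro sum.cong) auto
  also have "\<dots> = (if i < D then a * f i else 0)"
    by (simp only: sum.delta' finite_lessThan lessThan_iff)
  finally show ?thesis .
qed

lemma sum_lessThan_first_two:
  assumes "2 \<le> D" and "\<And>i. 2 \<le> i \<Longrightarrow> f i = 0"
  shows "(\<Sum>i<(D::nat). f i) = f 0 + (f 1 :: real)"
proof -
  have "(\<Sum>i<D. f i) = (\<Sum>i\<in>{0, 1}. f i)"
    using assms by (intro sum.mono_neutral_right) auto
  then show ?thesis
    by simp
qed

section \<open>Convex hulls of matrices\<close>

definition mix :: "real \<Rightarrow> (nat \<Rightarrow> nat \<Rightarrow> real) \<Rightarrow> (nat \<Rightarrow> nat \<Rightarrow> real) \<Rightarrow> (nat \<Rightarrow> nat \<Rightarrow> real)" where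
  "mix t X Y = (\<lambda>a b. t * X a b + (1 - t) * Y a b)"

definition mixing_closed :: "(nat \<Rightarrow> nat \<Rightarrow> real) set \<Rightarrow> bool" where
  "mixing_closed C \<longleftrightarrow> (\<forall>X\<in>C. \<forall>Y\<in>C. \<forall>t. 0 \<le> t \<and> t \<le> 1 \<longrightarrow> mix t X Y \<in> C)"

lemma mixing_closedD:
  "mixing_closed C \<Longrightarrow> X \<in> C \<Longrightarrow> Y \<in> C \<Longrightarrow> 0 \<le> t \<Longrightarrow> t \<le> 1 \<Longrightarrow> mix t X Y \<in> C"
  unfolding mixing_closed_def by blast

lemma mixing_closed_vimage:
  assumes "mixing_closed C" and "\<And>t X Y. f (mix t X Y) = mix t (f X) (f Y)"
  shows "mixing_closed {X. f X \<in> C}"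
  using assms unfolding mixing_closed_def by auto

lemma mixing_closed_minner_unit_interval:
  "mixing_closed {X. 0 \<le> minner D E X \<and> minner D E X \<le> 1}"
proof -
  have minner_mix: "minner D E (mix t X Y) = t * minner D E X + (1 - t) * minner D E Y" for t X Y
    unfolding minner_def mix_def
    by (simp add: distrib_left distrib_right mult.left_commute sum.distrib sum_distrib_left)
  have "0 \<le> t * u + (1 - t) * v \<and> t * u + (1 - t) * v \<le> 1"
    if "0 \<le> t" "t \<le> 1" "0 \<le> u" "u \<le> 1" "0 \<le> v" "v \<le> 1" for t u v :: real
    using that mult_left_mono[of u 1 t] mult_left_mono[of v 1 "1 - t"] by simp
  then show ?thesis
    unfolding mixing_closed_def by (simp add: minner_mix)
qed

lemma actA_mix_left: "actA D (mix t S T) X = mix t (actA D S X) (actA D T X)"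
  unfolding actA_def mix_def
  by (simp add: distrib_left distrib_right mult.assoc sum.distrib sum_distrib_left)

lemma actA_mix_right: "actA D T (mix t X Y) = mix t (actA D T X) (actA D T Y)"
  unfolding actA_def mix_def
  by (simp add: distrib_left distrib_right mult.left_commute sum.distrib sum_distrib_left)

lemma mhull_inc: "X \<in> S \<Longrightarrow> X \<in> mhull S"
  unfolding mhull_def by (rule CollectI, rule exI[of _ 1], rule exI[of _ "\<lambda>_. 1"]) auto

lemma mixing_closed_mhull: "mixing_closed (mhull S)"
  unfolding mixing_closed_def
proof (intro ballI allI impI)
  fix X Y and t :: real assume "X \<in> mhull S" "Y \<in> mhull S" and t: "0 \<le> t \<and> t \<le> 1"
  obtain m1 :: nat and c1 Y1 where h1: "\<forall>i<m1. 0 \<le> c1 i \<and> Y1 i \<in> S" "(\<Sum>i<m1. c1 i) = 1"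
      "X = (\<lambda>a b. \<Sum>i<m1. c1 i * Y1 i a b)"
    using \<open>X \<in> mhull S\<close> unfolding mhull_def by blast
  obtain m2 :: nat and c2 Y2 where h2: "\<forall>i<m2. 0 \<le> c2 i \<and> Y2 i \<in> S" "(\<Sum>i<m2. c2 i) = 1"
      "Y = (\<lambda>a b. \<Sum>i<m2. c2 i * Y2 i a b)"
    using \<open>Y \<in> mhull S\<close> unfolding mhull_def by blast
  define c where "c i = (if i < m1 then t * c1 i else (1 - t) * c2 (i - m1))" for i
  define Z where "Z i = (if i < m1 then Y1 i else Y2 (i - m1))" for i
  have "\<forall>i<m1 + m2. 0 \<le> c i \<and> Z i \<in> S"
    using h1 h2 t by (auto simp: c_def Z_def)
  moreover have "(\<Sum>i<m1 + m2. c i) = 1"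
    using h1 h2 by (simp add: sum_lessThan_add c_def sum_distrib_left[symmetric])
  moreover have "mix t X Y = (\<lambda>a b. \<Sum>i<m1 + m2. c i * Z i a b)"
    using h1 h2 by (auto simp: mix_def sum_lessThan_add c_def Z_def sum_distrib_left mult.assoc)
  ultimately show "mix t X Y \<in> mhull S"
    unfolding mhull_def by blast
qed

lemma mhull_minimal:
  assumes C: "mixing_closed C" and "S \<subseteq> C" and "X \<in> mhull S"
  shows "X \<in> C"
proof -
  have "(\<lambda>a b. \<Sum>i<m. c i * Y i a b) \<in> C"
    if "\<forall>i<m. 0 \<le> c i \<and> Y i \<in> S" "(\<Sum>i<m. c i) = 1" for m :: nat and c :: "nat \<Rightarrow> real" and Y
    using that
  proof (induction m arbitrary: c)
    case 0
    then show ?case by simp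
  next
    case (Suc m)
    define s where "s = (\<Sum>i<m. c i)"
    have s: "0 \<le> s" "s \<le> 1" and cm: "c m = 1 - s"
      using Suc.prems unfolding s_def by (auto intro: sum_nonneg)
    show ?case
    proof (cases "s = 0")
      case True
      then have "\<forall>i<m. c i = 0"
        using Suc.prems unfolding s_def by (subst (asm) sum_nonneg_eq_0_iff) auto
      then have "(\<lambda>a b. \<Sum>i<Suc m. c i * Y i a b) = Y m"
        using cm True by (auto simp: fun_eq_iff)
      then show ?thesis
        using Suc.prems \<open>S \<subseteq> C\<close> by auto
    next
      case False
      have "(\<lambda>a b. \<Sum>i<m. c i / s * Y i a b) \<in> C"
        using Suc.IH[of "\<lambda>i. c i / s"] Suc.prems s False
        by (auto simp: s_def sum_divide_distrib[symmetric])
      then have "mix s (\<lambda>a b. \<Sum>i<m. c i / s * Y i a b) (Y m) \<in> C"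
        using Suc.prems \<open>S \<subseteq> C\<close> s by (intro mixing_closedD[OF C]) auto
      moreover have "mix s (\<lambda>a b. \<Sum>i<m. c i / s * Y i a b) (Y m) = (\<lambda>a b. \<Sum>i<Suc m. c i * Y i a b)"
        using False cm by (auto simp: fun_eq_iff mix_def sum_distrib_left)
      ultimately show ?thesis
        by simp
    qed
  qed
  then show ?thesis
    using \<open>X \<in> mhull S\<close> unfolding mhull_def by blast
qed

lemma mem_mhull_image:
  assumes "mixing_closed {X. f X \<in> mhull T}" and "\<And>X. X \<in> S \<Longrightarrow> f X \<in> T" and "X \<in> mhull S"
  shows "f X \<in> mhull T"
  using mhull_minimal[OF assms(1) _ assms(3)] assms(2) mhull_inc by blast

section \<open>Walsh characters\<close>

lemma dvec_eq_prod:
  assumes "\<nu> < 2^N"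
  shows "dvec N \<mu> \<nu> = (\<Prod>k<N. if bit \<mu> k \<and> bit \<nu> k then -1 else 1)"
proof -
  have "dvec N \<mu> \<nu> = (-1) ^ bitdot N \<mu> \<nu>"
    using assms by (simp add: dvec_def)
  also have "\<dots> = (-1) ^ (\<Sum>k<N. (\<mu> div 2^k mod 2) * (\<nu> div 2^k mod 2))"
    unfolding bitdot_def by (simp add: minus_one_power_iff)
  also have "\<dots> = (\<Prod>k<N. (-1) ^ ((\<mu> div 2^k mod 2) * (\<nu> div 2^k mod 2)))"
    by (rule power_sum)
  also have "\<dots> = (\<Prod>k<N. if bit \<mu> k \<and> bit \<nu> k then -1 else 1)"
    by (intro prod.cong) (simp_all add: bit_iff_odd mod2_eq_if)
  finally show ?thesis .
qed

lemma dvec_outside: "\<not> \<nu> < 2^N \<Longrightarrow> dvec N \<mu> \<nu> = 0"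
  by (simp add: dvec_def)

lemma dvec_zero_index: "dvec N \<mu> 0 = 1"
  by (simp add: dvec_def bitdot_def)

lemma dvec_sign: "\<nu> < 2^N \<Longrightarrow> dvec N \<mu> \<nu> = 1 \<or> dvec N \<mu> \<nu> = -1"
  by (simp add: dvec_def minus_one_power_iff)

lemma dvec_commute: "\<mu> < 2^N \<Longrightarrow> \<nu> < 2^N \<Longrightarrow> dvec N \<mu> \<nu> = dvec N \<nu> \<mu>"
  by (simp add: dvec_def bitdot_def mult.commute)

lemma dvec_mult_xor: "dvec N \<mu> \<nu> * dvec N \<mu>' \<nu> = dvec N (xor \<mu> \<mu>') \<nu>"
proof (cases "\<nu> < 2^N")
  case True
  then show ?thesis
    by (simp add: dvec_eq_prod prod.distrib[symmetric] bit_xor_iff) (rule prod.cong, auto)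
qed (simp add: dvec_outside)

lemma xor_less_two_power: "x < 2^N \<Longrightarrow> y < 2^N \<Longrightarrow> xor x y < (2::nat)^N"
  by (metis take_bit_nat_eq_self_iff take_bit_xor)

lemma xor_eq_0_iff: "xor x y = (0::nat) \<longleftrightarrow> x = y"
  by (auto simp: bit_eq_iff bit_xor_iff)

lemma sum_dvec:
  assumes \<mu>: "\<mu> < 2^N"
  shows "(\<Sum>\<nu><2^N. dvec N \<mu> \<nu>) = (if \<mu> = 0 then 2^N else 0)"
proof (cases "\<mu> = 0")
  case True
  then show ?thesis
    by (simp add: dvec_def bitdot_def)
next
  case False
  then obtain k where "bit \<mu> k"
    using bit_eqI[of \<mu> 0] by auto
  then have k: "k < N"
    using \<mu> take_bit_nat_eq_self[OF \<mu>] by (metis bit_take_bit_iff)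
  define flip where "flip \<nu> = xor \<nu> (2^k)" for \<nu> :: nat
  have flip_range: "flip \<nu> < 2^N" if "\<nu> < 2^N" for \<nu>
    unfolding flip_def using that k by (intro xor_less_two_power) auto
  have flip_flip: "flip (flip \<nu>) = \<nu>" for \<nu>
    by (simp add: flip_def xor.assoc)
  \<comment> \<open>Flipping a bit on which \<open>\<mu>\<close> is set changes the sign of the character.\<close>
  have "(\<Prod>j<N. if bit \<mu> j \<and> bit ((2::nat)^k) j then -1 else 1) = (\<Prod>j<N. if j = k then -1 else (1::real))"
    using \<open>bit \<mu> k\<close> by (intro prod.cong) (auto simp: bit_exp_iff)
  then have "dvec N \<mu> (2^k) = -1"
    using k by (simp add: dvec_eq_prod)
  then have flip_sign: "dvec N \<mu> (flip \<nu>) = - dvec N \<mu> \<nu>" if "\<nu> < 2^N" for \<nu>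
  proof -
    have "(2::nat)^k < 2^N"
      using k by simp
    have "dvec N \<mu> (flip \<nu>) = dvec N (flip \<nu>) \<mu>"
      by (rule dvec_commute[OF \<mu> flip_range[OF that]])
    also have "\<dots> = dvec N \<nu> \<mu> * dvec N (2^k) \<mu>"
      by (simp add: flip_def dvec_mult_xor)
    also have "\<dots> = dvec N \<mu> \<nu> * dvec N \<mu> (2^k)"
      by (simp only: dvec_commute[OF \<mu> that] dvec_commute[OF \<mu> \<open>(2::nat)^k < 2^N\<close>])
    finally show ?thesis
      using \<open>dvec N \<mu> (2^k) = -1\<close> by simp
  qed
  have "(\<Sum>\<nu><2^N. dvec N \<mu> \<nu>) = (\<Sum>\<nu><2^N. dvec N \<mu> (flip \<nu>))"
    by (rule sum.reindex_bij_witness[of _ flip flip]) (auto simp: flip_range flip_flip)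
  also have "\<dots> = - (\<Sum>\<nu><2^N. dvec N \<mu> \<nu>)"
    by (simp add: flip_sign sum_negf)
  finally show ?thesis
    using False by simp
qed

section \<open>The dense coding protocol\<close>

lemma actA_phi_phi: "actA (2^N) (phi N \<mu>) (phi N \<nu>) = phi N (xor \<mu> \<nu>)"
  unfolding actA_def phi_def
  by (simp add: fun_eq_iff sum_lessThan_delta dvec_outside dvec_mult_xor)

lemma actA_phi_phi_zero: "actA (2^N) (phi N \<mu>) (phi N 0) = phi N \<mu>"
  by (simp add: actA_phi_phi)

lemma Emeas_eq_diag: "Emeas N \<mu> = (\<lambda>i j. if i = j then dvec N \<mu> i / 2^N else 0)"
  by (simp add: fun_eq_iff Emeas_def phi_def)

lemma minner_diag: "minner D (\<lambda>i j. if i = j then f i else 0) X = (\<Sum>i<D. f i * X i i)"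
  unfolding minner_def by (simp add: sum_lessThan_delta)

lemma minner_Emeas_phi:
  assumes "\<mu> < 2^N" "\<nu> < 2^N"
  shows "minner (2^N) (Emeas N \<nu>) (phi N \<mu>) = (if \<nu> = \<mu> then 1 else 0)"
proof -
  have "minner (2^N) (Emeas N \<nu>) (phi N \<mu>) = (\<Sum>i<2^N. dvec N (xor \<nu> \<mu>) i) / 2^N"
    unfolding Emeas_eq_diag minner_diag
    by (simp add: phi_def sum_divide_distrib dvec_mult_xor)
  also have "\<dots> = (if \<nu> = \<mu> then 1 else 0)"
    using sum_dvec[OF xor_less_two_power[OF assms(2,1)]] by (simp add: xor_eq_0_iff)
  finally show ?thesis .
qed

lemma sum_Emeas: "(\<Sum>\<mu><2^N. Emeas N \<mu>) = unitAB"
proof (intro ext)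
  fix i j
  have "(\<Sum>\<mu><2^N. dvec N \<mu> i) = (if i = 0 then 2^N else 0)"
  proof (cases "i < 2^N")
    case True
    then show ?thesis
      using sum_dvec[OF True] by (simp add: dvec_commute)
  qed (cases "i = 0", auto simp: dvec_outside)
  then show "(\<Sum>\<mu><2^N. Emeas N \<mu>) i j = unitAB i j"
    by (cases "i = j")
      (auto simp: sum_fun_apply Emeas_eq_diag unitAB_def tens_def unitv_def dvec_outside
        sum_divide_distrib[symmetric])
qed

lemma Emeas_in_msp: "Emeas N \<mu> \<in> msp (2^N)"
  by (auto simp: msp_def Emeas_eq_diag dvec_outside)

lemma minner_Emeas_tens_bounds:
  assumes N: "1 \<le> N" and v: "v \<in> hyp_states (2^N)" and w: "w \<in> hyp_states (2^N)"
  shows "0 \<le> minner (2^N) (Emeas N \<mu>) (tens v w) \<and> minner (2^N) (Emeas N \<mu>) (tens v w) \<le> 1"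
proof -
  define S where "S = (\<Sum>i\<in>{1..<(2::nat)^N}. dvec N \<mu> i * v i * w i)"
  have "{..<(2::nat)^N} = insert 0 {1..<2^N}"
    by auto
  then have minner_value: "minner (2^N) (Emeas N \<mu>) (tens v w) = (1 + S) / 2^N"
    using v w unfolding Emeas_eq_diag minner_diag
    by (simp add: S_def tens_def hyp_states_def dvec_zero_index sum_divide_distrib[symmetric] mult.assoc)
  have "\<bar>dvec N \<mu> i * v i * w i\<bar> \<le> ((v i)\<^sup>2 + (w i)\<^sup>2) / 2" if "i < 2^N" for i
    using dvec_sign[OF that, of \<mu>] sum_squares_bound[of "\<bar>v i\<bar>" "\<bar>w i\<bar>"] by (auto simp: abs_mult)
  then have "\<bar>S\<bar> \<le> (\<Sum>i\<in>{1..<(2::nat)^N}. ((v i)\<^sup>2 + (w i)\<^sup>2) / 2)"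
    unfolding S_def by (intro order.trans[OF sum_abs] sum_mono) auto
  also have "\<dots> = ((\<Sum>i\<in>{1..<(2::nat)^N}. (v i)\<^sup>2) + (\<Sum>i\<in>{1..<(2::nat)^N}. (w i)\<^sup>2)) / 2"
    by (simp only: sum.distrib sum_divide_distrib[symmetric])
  also have "\<dots> \<le> 1"
    using v w by (simp add: hyp_states_def)
  finally have "\<bar>S\<bar> \<le> 1" .
  moreover have "(2::real) \<le> 2^N"
    using power_increasing[OF N, of "2::real"] by simp
  ultimately show ?thesis
    unfolding minner_value by (auto simp: abs_le_iff field_simps)
qed

lemma Emeas_in_EffAB:
  assumes N: "1 \<le> N" and \<mu>: "\<mu> < 2^N"
  shows "Emeas N \<mu> \<in> EffAB N"
proof -
  let ?C = "{X. 0 \<le> minner (2^N) (Emeas N \<mu>) X \<and> minner (2^N) (Emeas N \<mu>) X \<le> 1}"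
  have "X \<in> ?C" if "X \<in> min_tensor (2^N)" for X
    using that unfolding min_tensor_def
    by (rule mhull_minimal[OF mixing_closed_minner_unit_interval, rotated])
      (use minner_Emeas_tens_bounds[OF N] in auto)
  moreover have "phi N \<nu> \<in> ?C" if "\<nu> < 2^N" for \<nu>
    using minner_Emeas_phi[OF that \<mu>] by simp
  ultimately have "min_tensor (2^N) \<union> {phi N \<nu> | \<nu>. \<nu> < 2^N} \<subseteq> ?C"
    by blast
  then have "OmegaAB N \<subseteq> ?C"
    unfolding OmegaAB_def using mhull_minimal[OF mixing_closed_minner_unit_interval] by blast
  then show ?thesis
    using Emeas_in_msp unfolding EffAB_def by blast
qed

lemma actA_phi_tens: "actA (2^N) (phi N \<mu>) (tens v w) = tens (\<lambda>i. dvec N \<mu> i * v i) w"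
  unfolding actA_def phi_def tens_def
  by (simp add: fun_eq_iff sum_lessThan_delta dvec_outside)

lemma dvec_mult_in_hyp_states:
  assumes v: "v \<in> hyp_states (2^N)"
  shows "(\<lambda>i. dvec N \<mu> i * v i) \<in> hyp_states (2^N)"
proof -
  have "(dvec N \<mu> i * v i)\<^sup>2 = (v i)\<^sup>2" if "i < 2^N" for i
    using dvec_sign[OF that, of \<mu>] by auto
  then have "(\<Sum>i\<in>{1..<(2::nat)^N}. (dvec N \<mu> i * v i)\<^sup>2) = (\<Sum>i\<in>{1..<(2::nat)^N}. (v i)\<^sup>2)"
    by (intro sum.cong) auto
  then show ?thesis
    using v by (auto simp: hyp_states_def vsp_def dvec_zero_index)
qed

lemma actA_phi_min_tensor:
  assumes "X \<in> min_tensor (2^N)"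
  shows "actA (2^N) (phi N \<mu>) X \<in> min_tensor (2^N)"
  using assms unfolding min_tensor_def
  by (rule mem_mhull_image[OF mixing_closed_vimage[OF mixing_closed_mhull actA_mix_right], rotated])
    (auto simp: actA_phi_tens, metis dvec_mult_in_hyp_states)

lemma actA_phi_OmegaAB:
  assumes "\<mu> < 2^N" and "X \<in> OmegaAB N"
  shows "actA (2^N) (phi N \<mu>) X \<in> OmegaAB N"
  using assms(2) unfolding OmegaAB_def
  by (rule mem_mhull_image[OF mixing_closed_vimage[OF mixing_closed_mhull actA_mix_right], rotated])
    (auto simp: actA_phi_phi xor_less_two_power[OF assms(1)] intro: actA_phi_min_tensor mhull_inc)

lemma mixing_closed_OmegaAB: "mixing_closed (OmegaAB N)"
  unfolding OmegaAB_def by (rule mixing_closed_mhull)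

lemma actA_allowedT_OmegaAB:
  assumes "T \<in> allowedT N" and "X \<in> OmegaAB N"
  shows "actA (2^N) T X \<in> OmegaAB N"
proof -
  have "mixing_closed {T. actA (2^N) T X \<in> OmegaAB N}"
    by (rule mixing_closed_vimage[OF mixing_closed_OmegaAB actA_mix_left])
  moreover have "{phi N \<mu> | \<mu>. \<mu> < 2^N} \<subseteq> {T. actA (2^N) T X \<in> OmegaAB N}"
    using actA_phi_OmegaAB[OF _ assms(2)] by blast
  ultimately show ?thesis
    using mhull_minimal assms(1) unfolding allowedT_def by blast
qed

lemma phi_zero_in_OmegaAB: "phi N 0 \<in> OmegaAB N"
  unfolding OmegaAB_def by (rule mhull_inc) auto

lemma phi_in_allowedT: "\<mu> < 2^N \<Longrightarrow> phi N \<mu> \<in> allowedT N"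
  unfolding allowedT_def by (rule mhull_inc) auto

section \<open>Mutual information\<close>

lemma mutual_info_cong:
  assumes "\<And>x y. x < m \<Longrightarrow> y < k \<Longrightarrow> W x y = W' x y"
  shows "mutual_info m k p W = mutual_info m k p W'"
proof -
  have "(\<Sum>x'<m. p x' * W x' y) = (\<Sum>x'<m. p x' * W' x' y)" if "y < k" for y
    using assms that by (intro sum.cong) auto
  then show ?thesis
    unfolding mutual_info_def using assms by (intro sum.cong) auto
qed

lemma mutual_info_identity_channel:
  assumes "0 < M"
  shows "mutual_info M M (\<lambda>_. 1 / real M) (\<lambda>x y. if y = x then 1 else 0) = log 2 (real M)"
proof -
  have output_prob: "(\<Sum>x'<M. 1 / real M * (if y = x' then 1 else 0)) = 1 / real M" if "y < M" for y
    using that by (simp add: sum_divide_distrib[symmetric])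
  have "mutual_info M M (\<lambda>_. 1 / real M) (\<lambda>x y. if y = x then 1 else 0)
      = (\<Sum>x<M. \<Sum>y<M. if y = x then log 2 (real M) / real M else 0)"
    unfolding mutual_info_def using assms output_prob by (intro sum.cong) (auto simp: log_divide)
  also have "\<dots> = log 2 (real M)"
    using assms by simp
  finally show ?thesis .
qed

lemma log_ratio_le:
  assumes "0 < c" "0 < w" "w \<le> c * a" "0 < q"
  shows "log 2 (w / q) \<le> log 2 c + (a / q - 1) / ln 2"
proof -
  have a: "0 < a"
    using assms zero_less_mult_iff[of c a] by linarith
  have "log 2 (w / q) \<le> log 2 (c * (a / q))"
    using assms by (simp add: divide_right_mono)
  also have "\<dots> = log 2 c + log 2 (a / q)"
    using log_mult[of 2 c "a / q"] assms a by (simp del: times_divide_eq_right)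
  also have "\<dots> \<le> log 2 c + (a / q - 1) / ln 2"
    unfolding log_def using a assms by (intro add_left_mono divide_right_mono ln_le_minus_one) auto
  finally show ?thesis .
qed

lemma sum_weighted_log_ratio_le:
  fixes z w :: "'a \<Rightarrow> real" and X :: "'a set"
  defines "q \<equiv> (\<Sum>x\<in>X. z x)"
  assumes "finite X" "0 < c" "0 \<le> a"
    and z: "\<And>x. x \<in> X \<Longrightarrow> 0 \<le> z x"
    and w: "\<And>x. x \<in> X \<Longrightarrow> z x \<noteq> 0 \<Longrightarrow> 0 < w x \<and> w x \<le> c * a"
  shows "(\<Sum>x\<in>X. if z x = 0 then 0 else z x * log 2 (w x / q)) \<le> q * log 2 c + (a - q) / ln 2"
proof (cases "q = 0")
  case True
  then have "\<forall>x\<in>X. z x = 0"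
    using z \<open>finite X\<close> unfolding q_def by (subst (asm) sum_nonneg_eq_0_iff) auto
  then show ?thesis
    using True \<open>0 \<le> a\<close> by simp
next
  case False
  have "0 \<le> q"
    unfolding q_def using z by (intro sum_nonneg) auto
  with False have q: "0 < q"
    by linarith
  have "(if z x = 0 then 0 else z x * log 2 (w x / q)) \<le> z x * log 2 c + (z x * a / q - z x) / ln 2"
    if x: "x \<in> X" for x
  proof (cases "z x = 0")
    case False
    then have "z x * log 2 (w x / q) \<le> z x * (log 2 c + (a / q - 1) / ln 2)"
      using z[OF x] w[OF x] log_ratio_le[OF \<open>0 < c\<close> _ _ q] by (intro mult_left_mono) auto
    then show ?thesis
      using False by (simp add: field_simps)
  qed simp
  then have "(\<Sum>x\<in>X. if z x = 0 then 0 else z x * log 2 (w x / q))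
      \<le> (\<Sum>x\<in>X. z x * log 2 c + (z x * a / q - z x) / ln 2)"
    by (rule sum_mono)
  also have "\<dots> = q * log 2 c + (q * a / q - q) / ln 2"
    unfolding q_def
    by (simp add: sum.distrib sum_divide_distrib[symmetric] sum_subtractf sum_distrib_right[symmetric])
  also have "\<dots> = q * log 2 c + (a - q) / ln 2"
    using q by simp
  finally show ?thesis .
qed

lemma mutual_info_le_log:
  assumes p: "is_distr m p" and a: "is_distr k a" and "0 < c"
    and W_nonneg: "\<And>x y. x < m \<Longrightarrow> y < k \<Longrightarrow> 0 \<le> W x y"
    and W_rows: "\<And>x. x < m \<Longrightarrow> (\<Sum>y<k. W x y) = 1"
    and W_le: "\<And>x y. x < m \<Longrightarrow> y < k \<Longrightarrow> W x y \<le> c * a y"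
  shows "mutual_info m k p W \<le> log 2 c"
proof -
  define q where "q y = (\<Sum>x<m. p x * W x y)" for y
  have p_nonneg: "0 \<le> p x" if "x < m" for x
    using p that by (simp add: is_distr_def)
  have W_pos: "0 < W x y" if "x < m" "y < k" "p x * W x y \<noteq> 0" for x y
    using that W_nonneg[OF that(1,2)] by (simp add: order_le_less)
  have column: "(\<Sum>x<m. if p x * W x y = 0 then 0 else p x * W x y * log 2 (W x y / q y))
      \<le> q y * log 2 c + (a y - q y) / ln 2" if "y < k" for y
    unfolding q_def using that a p_nonneg W_nonneg W_pos W_le
    by (intro sum_weighted_log_ratio_le \<open>0 < c\<close>) (auto simp: is_distr_def)
  have q_sum: "(\<Sum>y<k. q y) = 1"
  proof -
    have "(\<Sum>y<k. q y) = (\<Sum>x<m. p x * (\<Sum>y<k. W x y))"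
      unfolding q_def by (simp add: sum_distrib_left) (rule sum.swap)
    also have "\<dots> = 1"
      using p W_rows by (simp add: is_distr_def)
    finally show ?thesis .
  qed
  have "mutual_info m k p W
      = (\<Sum>y<k. \<Sum>x<m. if p x * W x y = 0 then 0 else p x * W x y * log 2 (W x y / q y))"
    unfolding mutual_info_def q_def by (rule sum.swap)
  also have "\<dots> \<le> (\<Sum>y<k. q y * log 2 c + (a y - q y) / ln 2)"
    by (intro sum_mono column) auto
  also have "\<dots> = log 2 c"
    using a q_sum
    by (simp add: is_distr_def sum.distrib sum_divide_distrib[symmetric] sum_subtractf
        sum_distrib_right[symmetric])
  finally show ?thesis .
qed

lemma mutual_info_le_classical_capacity:
  assumes "is_distr m p" "\<forall>x<m. \<omega> x \<in> \<Omega>" "\<forall>y<k. e y \<in> \<E>" "(\<Sum>y<k. e y) = u"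
  shows "ereal (mutual_info m k p (\<lambda>x y. ip (e y) (\<omega> x))) \<le> classical_capacity ip \<Omega> \<E> u"
  unfolding classical_capacity_def using assms by (intro Sup_upper) blast

lemma mutual_info_le_dense_coding_capacity:
  assumes "\<phi> \<in> \<Omega>" "is_distr m p" "\<forall>x<m. T x \<in> Ts" "\<forall>y<k. E y \<in> \<E>" "(\<Sum>y<k. E y) = u"
  shows "ereal (mutual_info m k p (\<lambda>x y. ip (E y) (act (T x) \<phi>))) \<le> dense_coding_capacity ip \<Omega> \<E> u Ts act"
  unfolding dense_coding_capacity_def using assms by (intro Sup_upper) blast

lemma dense_coding_capacity_le_classical_capacity:
  assumes "\<And>T \<phi>. T \<in> Ts \<Longrightarrow> \<phi> \<in> \<Omega> \<Longrightarrow> act T \<phi> \<in> \<Omega>"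
  shows "dense_coding_capacity ip \<Omega> \<E> u Ts act \<le> classical_capacity ip \<Omega> \<E> u"
  unfolding dense_coding_capacity_def
  by (rule Sup_least, clarify, rule mutual_info_le_classical_capacity) (auto intro: assms)

section \<open>Capacity of a single hypersphere\<close>

lemma vinner_unitv: "0 < D \<Longrightarrow> vinner D e unitv = e 0"
  unfolding vinner_def unitv_def by (simp add: if_distrib cong: if_cong)

lemma unitv_in_hyp_states: "0 < D \<Longrightarrow> unitv \<in> hyp_states D"
  unfolding hyp_states_def vsp_def unitv_def by auto

lemma hyp_effect_le_twice_unit:
  assumes D: "0 < D" and e: "e \<in> hyp_effects D" and \<omega>: "\<omega> \<in> hyp_states D"
  shows "vinner D e \<omega> \<le> 2 * e 0"
proof -
  define \<omega>' where "\<omega>' i = (if i = 0 then 1 else - \<omega> i)" for i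
  have "\<omega>' \<in> hyp_states D"
    using \<omega> D unfolding hyp_states_def vsp_def \<omega>'_def by auto
  then have "0 \<le> vinner D e \<omega>'"
    using e by (simp add: hyp_effects_def)
  moreover have "vinner D e \<omega> + vinner D e \<omega>' = (\<Sum>i<D. 2 * (e i * unitv i))"
    using \<omega> unfolding vinner_def \<omega>'_def unitv_def hyp_states_def sum.distrib[symmetric]
    by (intro sum.cong) auto
  ultimately show ?thesis
    using vinner_unitv[OF D, of e] by (simp add: vinner_def sum_distrib_left[symmetric])
qed

lemma hyp_capacity_le_one:
  assumes D: "0 < D"
  shows "classical_capacity (vinner D) (hyp_states D) (hyp_effects D) unitv \<le> 1"
  unfolding classical_capacity_def
proof (rule Sup_least, clarify)
  fix m k :: nat and p :: "nat \<Rightarrow> real" and \<omega> e :: "nat \<Rightarrow> nat \<Rightarrow> real"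
  assume p: "is_distr m p" and \<omega>: "\<forall>x<m. \<omega> x \<in> hyp_states D"
    and e: "\<forall>y<k. e y \<in> hyp_effects D" and e_sum: "(\<Sum>y<k. e y) = unitv"
  have vinner_sum: "(\<Sum>y<k. vinner D (e y) w) = w 0" for w
  proof -
    have "(\<Sum>y<k. vinner D (e y) w) = vinner D unitv w"
      unfolding e_sum[symmetric] vinner_def sum_fun_apply sum_distrib_right by (rule sum.swap)
    also have "\<dots> = vinner D w unitv"
      by (simp add: vinner_def mult.commute)
    also have "\<dots> = w 0"
      by (rule vinner_unitv[OF D])
    finally show ?thesis .
  qed
  have e0: "0 \<le> e y 0" if "y < k" for y
  proof -
    have "0 \<le> vinner D (e y) unitv"
      using e that unitv_in_hyp_states[OF D] by (simp add: hyp_effects_def)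
    then show ?thesis
      using vinner_unitv[OF D] by simp
  qed
  have "is_distr k (\<lambda>y. e y 0)"
    using e0 e_sum unfolding is_distr_def by (simp add: sum_fun_apply[symmetric] unitv_def)
  then have "mutual_info m k p (\<lambda>x y. vinner D (e y) (\<omega> x)) \<le> log 2 2"
  proof (rule mutual_info_le_log[of m p k "\<lambda>y. e y 0" 2 "\<lambda>x y. vinner D (e y) (\<omega> x)", OF p])
    show "\<And>x y. x < m \<Longrightarrow> y < k \<Longrightarrow> 0 \<le> vinner D (e y) (\<omega> x)"
      using \<omega> e by (simp add: hyp_effects_def)
    show "\<And>x. x < m \<Longrightarrow> (\<Sum>y<k. vinner D (e y) (\<omega> x)) = 1"
      using \<omega> by (simp add: vinner_sum hyp_states_def)
    show "\<And>x y. x < m \<Longrightarrow> y < k \<Longrightarrow> vinner D (e y) (\<omega> x) \<le> 2 * e y 0"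
      using \<omega> e hyp_effect_le_twice_unit[OF D] by simp
  qed simp
  then show "ereal (mutual_info m k p (\<lambda>x y. vinner D (e y) (\<omega> x))) \<le> 1"
    by simp
qed

definition axis_state :: "real \<Rightarrow> nat \<Rightarrow> real" where
  "axis_state s i = (if i = 0 then 1 else if i = 1 then s else 0)"

lemma axis_state_in_hyp_states:
  assumes "2 \<le> D" and "\<bar>s\<bar> \<le> 1"
  shows "axis_state s \<in> hyp_states D"
proof -
  have "(\<Sum>i\<in>{1..<D}. (axis_state s i)\<^sup>2) = (\<Sum>i\<in>{1}. (axis_state s i)\<^sup>2)"
    using assms by (intro sum.mono_neutral_right) (auto simp: axis_state_def)
  then show ?thesis
    using assms by (auto simp: hyp_states_def vsp_def axis_state_def abs_square_le_1)
qed

lemma vinner_half_axis_state: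
  "2 \<le> D \<Longrightarrow> vinner D (\<lambda>i. axis_state s i / 2) w = (w 0 + s * w 1) / 2"
  unfolding vinner_def by (subst sum_lessThan_first_two) (auto simp: axis_state_def)

lemma half_axis_state_in_hyp_effects:
  assumes D: "2 \<le> D" and "\<bar>s\<bar> \<le> 1"
  shows "(\<lambda>i. axis_state s i / 2) \<in> hyp_effects D"
proof -
  have "0 \<le> vinner D (\<lambda>i. axis_state s i / 2) w \<and> vinner D (\<lambda>i. axis_state s i / 2) w \<le> 1"
    if w: "w \<in> hyp_states D" for w
  proof -
    have "(w 1)\<^sup>2 \<le> (\<Sum>i\<in>{1..<D}. (w i)\<^sup>2)"
      using D by (intro member_le_sum) auto
    also have "\<dots> \<le> 1"
      using w by (simp add: hyp_states_def)
    finally have "\<bar>s * w 1\<bar> \<le> 1"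
      using \<open>\<bar>s\<bar> \<le> 1\<close> by (simp add: abs_square_le_1 abs_mult mult_le_one)
    moreover have "w 0 = 1"
      using w by (simp add: hyp_states_def)
    ultimately show ?thesis
      using D by (auto simp: vinner_half_axis_state abs_le_iff)
  qed
  then show ?thesis
    using D by (auto simp: hyp_effects_def vsp_def axis_state_def)
qed

lemma hyp_capacity_ge_one:
  assumes D: "2 \<le> D"
  shows "1 \<le> classical_capacity (vinner D) (hyp_states D) (hyp_effects D) unitv"
proof -
  define s :: "nat \<Rightarrow> real" where "s x = (if x = 0 then 1 else -1)" for x
  define \<omega> where "\<omega> x = axis_state (s x)" for x
  define e where "e y = (\<lambda>i. axis_state (s y) i / 2)" for y
  have vinner_e_\<omega>: "vinner D (e y) (\<omega> x) = (1 + s y * s x) / 2" for x y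
    using D unfolding e_def \<omega>_def by (simp add: vinner_half_axis_state) (simp add: axis_state_def)
  have "mutual_info 2 2 (\<lambda>_. 1 / real 2) (\<lambda>x y. vinner D (e y) (\<omega> x))
      = mutual_info 2 2 (\<lambda>_. 1 / real 2) (\<lambda>x y. if y = x then 1 else 0)"
    by (intro mutual_info_cong) (auto simp: vinner_e_\<omega> s_def less_2_cases_iff)
  also have "\<dots> = log 2 (real 2)"
    by (rule mutual_info_identity_channel) simp
  finally have "mutual_info 2 2 (\<lambda>_. 1 / real 2) (\<lambda>x y. vinner D (e y) (\<omega> x)) = 1"
    by simp
  moreover have "(\<Sum>y<2. e y) = unitv"
    by (auto simp: fun_eq_iff numeral_2_eq_2 e_def axis_state_def s_def unitv_def)
  then have "ereal (mutual_info 2 2 (\<lambda>_. 1 / real 2) (\<lambda>x y. vinner D (e y) (\<omega> x)))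
      \<le> classical_capacity (vinner D) (hyp_states D) (hyp_effects D) unitv"
    using D by (intro mutual_info_le_classical_capacity)
      (auto simp: is_distr_def \<omega>_def e_def s_def intro: axis_state_in_hyp_states half_axis_state_in_hyp_effects)
  ultimately show ?thesis
    by (simp add: one_ereal_def)
qed

lemma chiC_local_eq_one:
  assumes "1 \<le> N"
  shows "chiC_local N = 1"
proof -
  have "(2::nat) \<le> 2^N"
    using power_increasing[OF assms, of "2::nat"] by simp
  then show ?thesis
    unfolding chiC_local_def by (intro antisym hyp_capacity_le_one hyp_capacity_ge_one) auto
qed

lemma chiDC_AB_le_chiC_AB: "chiDC_AB N \<le> chiC_AB N"
  unfolding chiDC_AB_def chiC_AB_def
  by (rule dense_coding_capacity_le_classical_capacity) (rule actA_allowedT_OmegaAB)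

lemma N_le_chiDC_AB:
  assumes "1 \<le> N"
  shows "ereal (real N) \<le> chiDC_AB N"
proof -
  have "mutual_info (2^N) (2^N) (\<lambda>_. 1 / real (2^N))
      (\<lambda>x y. minner (2^N) (Emeas N y) (actA (2^N) (phi N x) (phi N 0)))
    = mutual_info (2^N) (2^N) (\<lambda>_. 1 / real (2^N)) (\<lambda>x y. if y = x then 1 else 0)"
    by (rule mutual_info_cong) (simp add: actA_phi_phi_zero minner_Emeas_phi)
  also have "\<dots> = log 2 (real (2^N))"
    by (rule mutual_info_identity_channel) simp
  also have "\<dots> = real N"
    by (simp add: log_nat_power)
  finally have "ereal (real N) = ereal (mutual_info (2^N) (2^N) (\<lambda>_. 1 / real (2^N))
      (\<lambda>x y. minner (2^N) (Emeas N y) (actA (2^N) (phi N x) (phi N 0))))"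
    by simp
  also have "\<dots> \<le> chiDC_AB N"
    unfolding chiDC_AB_def
    by (rule mutual_info_le_dense_coding_capacity)
      (simp_all add: phi_zero_in_OmegaAB is_distr_def phi_in_allowedT Emeas_in_EffAB[OF assms] sum_Emeas)
  finally show ?thesis .
qed

theorem mainTheorem11:
  fixes N :: nat
  assumes "1 \<le> N"
  shows "phi N 0 \<in> OmegaAB N
    \<and> (\<forall>x<2^N. phi N x \<in> allowedT N)
    \<and> (\<forall>y<2^N. Emeas N y \<in> EffAB N)
    \<and> (\<Sum>y<2^N. Emeas N y) = unitAB
    \<and> (\<forall>x<2^N. \<forall>y<2^N.
          minner (2^N) (Emeas N y) (actA (2^N) (phi N x) (phi N 0)) = (if y = x then 1 else 0))
    \<and> chiDC_AB N \<le> chiC_AB N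
    \<and> ereal (real N) \<le> chiDC_AB N
    \<and> chiC_local N = 1
    \<and> (3 \<le> N \<longrightarrow> chiDC_AB N > 2 * chiC_local N \<and> chiC_AB N > chiC_local N + chiC_local N)"
proof -
  have "ereal 2 < chiDC_AB N" if "3 \<le> N"
  proof -
    have "ereal 2 < ereal (real N)"
      using that by simp
    then show ?thesis
      using N_le_chiDC_AB[OF assms] by (rule less_le_trans)
  qed
  then have "3 \<le> N \<longrightarrow> 2 < chiDC_AB N \<and> 2 < chiC_AB N"
    using chiDC_AB_le_chiC_AB[of N] by (auto intro: less_le_trans)
  then show ?thesis
    using assms
    by (simp add: phi_zero_in_OmegaAB phi_in_allowedT Emeas_in_EffAB sum_Emeas
        actA_phi_phi_zero minner_Emeas_phi chiDC_AB_le_chiC_AB N_le_chiDC_AB chiC_local_eq_one)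
qed

end
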